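(* In the setting described in the context, let $\varepsilon\in(0,1)$, $\Omega_n=((1-\varepsilon)\Sigma_n+\varepsilon I)^{-1}$, $\mathbf c=\mathrm{vec}(\mathbf C^\top)$, and define the $n^2\times n^2$ matrix $$\widetilde\Omega_n=\frac1\varepsilon\mathbf I_{n^2}-\frac{1-\varepsilon}{\varepsilon}\mathbf T\big(\varepsilon\mathbf I_{2n+4}+(1-\varepsilon)\mathbf U^\top\mathbf T\big)^{-1}\mathbf U^\top.$$ Then $\Omega_n(\bar\psi_n)=\sum_{i,j}b_{ij}\Lambda_{x_i,y_j}$, where the coefficients $b_{ij}$ form a matrix $\mathbf B\in\mathbb{R}^{n\times n}$ satisfying $\mathbf b^\top:=[\mathrm{vec}(\mathbf B^\top)]^\top=\mathbf c^\top\widetilde\Omega_n$.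
   Context: $k,\ell$ bounded kernels on $\mathcal{X},\mathcal{Y}$ with feature maps $K_x,L_y$; $\mathcal{H}=\mathcal{H}_\mathcal{X}\otimes\mathcal{H}_\mathcal{Y}$ real separable tensor-product RKHS with feature map $\Lambda_{x,y}=K_x\otimes L_y$. Data $z_i=(x_i,a_i,y_i)$, $i\in[n]$; $[n]$ partitioned into folds $\mathcal{I}^1,\mathcal{I}^2$ of sizes $n_1,n_2$; $s(i)$ the fold containing $i$, $r(i)=3-s(i)$. For $r\in\{1,2\}$: $\pi^r_n:\mathcal{X}\to(0,1)$, $\theta^r_{n,a}(x)=\sum_j[\boldsymbol\beta^r_a(x)]_j\Lambda_{x,y_j}$ with $[\boldsymbol\beta^r_a(x)]_j=0$ if $j\notin\mathcal{I}^r$ or $a_j\ne a$; $w_i=\pi^{r(i)}_n(x_i)$. With $s=3-r$: $\psi^r_n=\frac1{n_s}\sum_{i\in\mathcal{I}^s}[\theta^r_{n,1}(x_i)-\theta^r_{n,0}(x_i)]$; $\phi^r_n(z)=(\frac{a}{\pi^r_n(x)}-\frac{1-a}{1-\pi^r_n(x)})(\Lambda_{x,y}-\theta^r_{n,a}(x))+\theta^r_{n,1}(x)-\theta^r_{n,0}(x)-\psi^r_n$; $\bar\psi_n=\frac12\sum_r(\psi^r_n+\frac1{n_s}\sum_{i\in\mathcal{I}^s}\phi^r_n(z_i))$; $\Sigma_n(h)=\frac12\sum_r\frac1{n_s}\sum_{i\in\mathcal{I}^s}\langle\phi^r_n(z_i),h\rangle_{\mathcal{H}}\phi^r_n(z_i)$.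 Matrices: $[\mathbf K]_{ij}=k(x_i,x_j)$, $[\mathbf L]_{ij}=\ell(y_i,y_j)$, $\mathbf G=\mathbf K\otimes\mathbf L$. $\mathbf C$: $[\mathbf C]_{ii}=\frac1{2n_{s(i)}}(\frac{a_i}{w_i}-\frac{1-a_i}{1-w_i})$, and for $j\ne i$, $[\mathbf C]_{ij}=\frac1{2n_{s(i)}}[(1-\frac{a_i}{w_i})[\boldsymbol\beta^{r(i)}_1(x_i)]_j+(\frac{1-a_i}{1-w_i}-1)[\boldsymbol\beta^{r(i)}_0(x_i)]_j]$. $\mathbf E$: $[\mathbf E]_{ii}=0$, and for $j\ne i$, $[\mathbf E]_{ij}=\frac1{2n_{s(i)}}([\boldsymbol\beta^{r(i)}_1(x_i)]_j-[\boldsymbol\beta^{r(i)}_0(x_i)]_j)$. For $s\in\{1,2\}$: $[\mathbf D^s]_{ij}=\mathbf 1\{i\in\mathcal{I}^s\}\sqrt{2n_s}[\mathbf C]_{ij}$, $[\mathbf V^s]_{ij}=\mathbf 1\{i\in\mathcal{I}^s\}\sqrt{2/n_s}[\mathbf E]_{ij}$, $\mathbf W^s=\mathbf D^s-n_s\mathbf V^s$; $\mathbf d^s,\mathbf v^s,\mathbf w^s$ their row-wise vectorizations $\mathrm{vec}(\mathbf M^\top)\in\mathbb{R}^{n^2}$; $\mathbf S^s=(\mathbf I_n\bullet\mathbf D^s)^\top$, where the $i$-th row of the face-splitting product $\mathbf A\bullet\mathbf B$ is $\mathbf A_{i,:}\otimes\mathbf B_{i,:}$. $\mathbf T=[\mathbf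 G\mathbf S^1,\mathbf G\mathbf S^2,\mathbf G\mathbf v^1,\mathbf G\mathbf v^2,\mathbf G\mathbf w^1,\mathbf G\mathbf w^2]$, $\mathbf U=[\mathbf S^1,\mathbf S^2,-\mathbf d^1,-\mathbf d^2,-\mathbf v^1,-\mathbf v^2]\in\mathbb{R}^{n^2\times(2n+4)}$. *)

theory Defs
  imports "HOL-Analysis.Inner_Product" "Jordan_Normal_Form.Gauss_Jordan_Elimination"
begin

text \<open>Row-wise vectorization: vecr M = vec(M^T), entry (i,j) of M sits at position i*ncols + j.\<close>
definition vecr :: "'a mat \<Rightarrow> 'a vec" where
  "vecr M = vec (dim_row M * dim_col M) (\<lambda>p. M $$ (p div dim_col M, p mod dim_col M))"

definition kron :: "'a::times mat \<Rightarrow> 'a mat \<Rightarrow> 'a mat" where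
  "kron A B = mat (dim_row A * dim_row B) (dim_col A * dim_col B)
     (\<lambda>(p,q). A $$ (p div dim_row B, q div dim_col B) * B $$ (p mod dim_row B, q mod dim_col B))"

definition face_split :: "'a::times mat \<Rightarrow> 'a mat \<Rightarrow> 'a mat" where
  "face_split A B = mat (dim_row A) (dim_col A * dim_col B)
     (\<lambda>(i,p). A $$ (i, p div dim_col B) * B $$ (i, p mod dim_col B))"

definition hcat :: "'a mat \<Rightarrow> 'a mat \<Rightarrow> 'a mat" where
  "hcat A B = mat (dim_row A) (dim_col A + dim_col B)
     (\<lambda>(i,j). if j < dim_col A then A $$ (i,j) else B $$ (i, j - dim_col A))"

definition col_mat :: "'a vec \<Rightarrow> 'a mat" where
  "col_mat v = mat (dim_vec v) 1 (\<lambda>(i,j). v $ i)"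

definition minv :: "real mat \<Rightarrow> real mat" where
  "minv M = the (mat_inverse M)"

text \<open>Data: z_i = (x i, a i, y i) for i < n; a i is the binary treatment (True = 1).
  Fold labels: fl i \<in> {1,2} is s(i); the fold I^r = {i<n. fl i = r}; r(i) = 3 - s(i).
  ps r : X -> (0,1) is the propensity estimate \<ps>^r_n; beta r b xx j is [\<beta>^r_b(xx)]_j.\<close>

definition fold_set :: "(nat \<Rightarrow> nat) \<Rightarrow> nat \<Rightarrow> nat \<Rightarrow> nat set" where
  "fold_set fl n r = {i. i < n \<and> fl i = r}"

definition nf :: "(nat \<Rightarrow> nat) \<Rightarrow> nat \<Rightarrow> nat \<Rightarrow> real" where
  "nf fl n r = real (card (fold_set fl n r))"

definition theta ::
  "('x \<Rightarrow> 'y \<Rightarrow> 'h::real_vector) \<Rightarrow> (nat \<Rightarrow> 'y) \<Rightarrow> nat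
   \<Rightarrow> (nat \<Rightarrow> bool \<Rightarrow> 'x \<Rightarrow> nat \<Rightarrow> real) \<Rightarrow> nat \<Rightarrow> bool \<Rightarrow> 'x \<Rightarrow> 'h" where
  "theta Lam y n beta r b xx = (\<Sum>j<n. beta r b xx j *\<^sub>R Lam xx (y j))"

definition psi_r ::
  "('x \<Rightarrow> 'y \<Rightarrow> 'h::real_vector) \<Rightarrow> (nat \<Rightarrow> 'x) \<Rightarrow> (nat \<Rightarrow> 'y) \<Rightarrow> nat \<Rightarrow> (nat \<Rightarrow> nat)
   \<Rightarrow> (nat \<Rightarrow> bool \<Rightarrow> 'x \<Rightarrow> nat \<Rightarrow> real) \<Rightarrow> nat \<Rightarrow> 'h" where
  "psi_r Lam x y n fl beta r =
     (1 / nf fl n (3 - r)) *\<^sub>R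
       (\<Sum>i\<in>fold_set fl n (3 - r). theta Lam y n beta r True (x i) - theta Lam y n beta r False (x i))"

definition phi_r ::
  "('x \<Rightarrow> 'y \<Rightarrow> 'h::real_vector) \<Rightarrow> (nat \<Rightarrow> 'x) \<Rightarrow> (nat \<Rightarrow> 'y) \<Rightarrow> nat \<Rightarrow> (nat \<Rightarrow> nat)
   \<Rightarrow> (nat \<Rightarrow> 'x \<Rightarrow> real) \<Rightarrow> (nat \<Rightarrow> bool \<Rightarrow> 'x \<Rightarrow> nat \<Rightarrow> real) \<Rightarrow> nat
   \<Rightarrow> 'x \<Rightarrow> bool \<Rightarrow> 'y \<Rightarrow> 'h" where
  "phi_r Lam x y n fl ps beta r xx aa yy =
     (of_bool aa / ps r xx - (1 - of_bool aa) / (1 - ps r xx)) *\<^sub>R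
        (Lam xx yy - theta Lam y n beta r aa xx)
     + theta Lam y n beta r True xx - theta Lam y n beta r False xx
     - psi_r Lam x y n fl beta r"

definition psibar ::
  "('x \<Rightarrow> 'y \<Rightarrow> 'h::real_vector) \<Rightarrow> (nat \<Rightarrow> 'x) \<Rightarrow> (nat \<Rightarrow> bool) \<Rightarrow> (nat \<Rightarrow> 'y) \<Rightarrow> nat
   \<Rightarrow> (nat \<Rightarrow> nat) \<Rightarrow> (nat \<Rightarrow> 'x \<Rightarrow> real) \<Rightarrow> (nat \<Rightarrow> bool \<Rightarrow> 'x \<Rightarrow> nat \<Rightarrow> real) \<Rightarrow> 'h" where
  "psibar Lam x a y n fl ps beta =
     (1/2) *\<^sub>R (\<Sum>r\<in>{1,2}. psi_r Lam x y n fl beta r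
        + (1 / nf fl n (3 - r)) *\<^sub>R
            (\<Sum>i\<in>fold_set fl n (3 - r). phi_r Lam x y n fl ps beta r (x i) (a i) (y i)))"

definition Sigma_n ::
  "('x \<Rightarrow> 'y \<Rightarrow> 'h::real_inner) \<Rightarrow> (nat \<Rightarrow> 'x) \<Rightarrow> (nat \<Rightarrow> bool) \<Rightarrow> (nat \<Rightarrow> 'y) \<Rightarrow> nat
   \<Rightarrow> (nat \<Rightarrow> nat) \<Rightarrow> (nat \<Rightarrow> 'x \<Rightarrow> real) \<Rightarrow> (nat \<Rightarrow> bool \<Rightarrow> 'x \<Rightarrow> nat \<Rightarrow> real) \<Rightarrow> 'h \<Rightarrow> 'h" where
  "Sigma_n Lam x a y n fl ps beta h =
     (1/2) *\<^sub>R (\<Sum>r\<in>{1,2}. (1 / nf fl n (3 - r)) *\<^sub>R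
        (\<Sum>i\<in>fold_set fl n (3 - r).
            inner (phi_r Lam x y n fl ps beta r (x i) (a i) (y i)) h
              *\<^sub>R phi_r Lam x y n fl ps beta r (x i) (a i) (y i)))"

definition Omega_n ::
  "real \<Rightarrow> ('x \<Rightarrow> 'y \<Rightarrow> 'h::real_inner) \<Rightarrow> (nat \<Rightarrow> 'x) \<Rightarrow> (nat \<Rightarrow> bool) \<Rightarrow> (nat \<Rightarrow> 'y) \<Rightarrow> nat
   \<Rightarrow> (nat \<Rightarrow> nat) \<Rightarrow> (nat \<Rightarrow> 'x \<Rightarrow> real) \<Rightarrow> (nat \<Rightarrow> bool \<Rightarrow> 'x \<Rightarrow> nat \<Rightarrow> real) \<Rightarrow> 'h \<Rightarrow> 'h" where
  "Omega_n eps Lam x a y n fl ps beta =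
     inv_into UNIV (\<lambda>h. (1 - eps) *\<^sub>R Sigma_n Lam x a y n fl ps beta h + eps *\<^sub>R h)"

definition Kmat :: "('x \<Rightarrow> 'x \<Rightarrow> real) \<Rightarrow> (nat \<Rightarrow> 'x) \<Rightarrow> nat \<Rightarrow> real mat" where
  "Kmat k x n = mat n n (\<lambda>(i,j). k (x i) (x j))"

definition Gmat :: "('x \<Rightarrow> 'x \<Rightarrow> real) \<Rightarrow> ('y \<Rightarrow> 'y \<Rightarrow> real) \<Rightarrow> (nat \<Rightarrow> 'x) \<Rightarrow> (nat \<Rightarrow> 'y)
   \<Rightarrow> nat \<Rightarrow> real mat" where
  "Gmat k l x y n = kron (Kmat k x n) (Kmat l y n)"

definition wgt :: "(nat \<Rightarrow> 'x) \<Rightarrow> (nat \<Rightarrow> nat) \<Rightarrow> (nat \<Rightarrow> 'x \<Rightarrow> real) \<Rightarrow> nat \<Rightarrow> real" where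
  "wgt x fl ps i = ps (3 - fl i) (x i)"

definition Cmat :: "(nat \<Rightarrow> 'x) \<Rightarrow> (nat \<Rightarrow> bool) \<Rightarrow> nat \<Rightarrow> (nat \<Rightarrow> nat) \<Rightarrow> (nat \<Rightarrow> 'x \<Rightarrow> real)
   \<Rightarrow> (nat \<Rightarrow> bool \<Rightarrow> 'x \<Rightarrow> nat \<Rightarrow> real) \<Rightarrow> real mat" where
  "Cmat x a n fl ps beta = mat n n (\<lambda>(i,j).
     (let w = wgt x fl ps i; ai = (of_bool (a i) :: real); c = 1 / (2 * nf fl n (fl i)) in
      if i = j then c * (ai / w - (1 - ai) / (1 - w))
      else c * ((1 - ai / w) * beta (3 - fl i) True (x i) j
                + ((1 - ai) / (1 - w) - 1) * beta (3 - fl i) False (x i) j)))"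

definition Emat :: "(nat \<Rightarrow> 'x) \<Rightarrow> nat \<Rightarrow> (nat \<Rightarrow> nat)
   \<Rightarrow> (nat \<Rightarrow> bool \<Rightarrow> 'x \<Rightarrow> nat \<Rightarrow> real) \<Rightarrow> real mat" where
  "Emat x n fl beta = mat n n (\<lambda>(i,j).
     if i = j then 0
     else 1 / (2 * nf fl n (fl i)) * (beta (3 - fl i) True (x i) j - beta (3 - fl i) False (x i) j))"

definition Dmat :: "(nat \<Rightarrow> 'x) \<Rightarrow> (nat \<Rightarrow> bool) \<Rightarrow> nat \<Rightarrow> (nat \<Rightarrow> nat) \<Rightarrow> (nat \<Rightarrow> 'x \<Rightarrow> real)
   \<Rightarrow> (nat \<Rightarrow> bool \<Rightarrow> 'x \<Rightarrow> nat \<Rightarrow> real) \<Rightarrow> nat \<Rightarrow> real mat" where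
  "Dmat x a n fl ps beta s = mat n n (\<lambda>(i,j).
     if fl i = s then sqrt (2 * nf fl n s) * Cmat x a n fl ps beta $$ (i,j) else 0)"

definition Vmat :: "(nat \<Rightarrow> 'x) \<Rightarrow> nat \<Rightarrow> (nat \<Rightarrow> nat)
   \<Rightarrow> (nat \<Rightarrow> bool \<Rightarrow> 'x \<Rightarrow> nat \<Rightarrow> real) \<Rightarrow> nat \<Rightarrow> real mat" where
  "Vmat x n fl beta s = mat n n (\<lambda>(i,j).
     if fl i = s then sqrt (2 / nf fl n s) * Emat x n fl beta $$ (i,j) else 0)"

definition Wmat :: "(nat \<Rightarrow> 'x) \<Rightarrow> (nat \<Rightarrow> bool) \<Rightarrow> nat \<Rightarrow> (nat \<Rightarrow> nat) \<Rightarrow> (nat \<Rightarrow> 'x \<Rightarrow> real)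
   \<Rightarrow> (nat \<Rightarrow> bool \<Rightarrow> 'x \<Rightarrow> nat \<Rightarrow> real) \<Rightarrow> nat \<Rightarrow> real mat" where
  "Wmat x a n fl ps beta s = Dmat x a n fl ps beta s - nf fl n s \<cdot>\<^sub>m Vmat x n fl beta s"

definition Smat :: "(nat \<Rightarrow> 'x) \<Rightarrow> (nat \<Rightarrow> bool) \<Rightarrow> nat \<Rightarrow> (nat \<Rightarrow> nat) \<Rightarrow> (nat \<Rightarrow> 'x \<Rightarrow> real)
   \<Rightarrow> (nat \<Rightarrow> bool \<Rightarrow> 'x \<Rightarrow> nat \<Rightarrow> real) \<Rightarrow> nat \<Rightarrow> real mat" where
  "Smat x a n fl ps beta s = transpose_mat (face_split (1\<^sub>m n) (Dmat x a n fl ps beta s))"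

definition Tmat :: "('x \<Rightarrow> 'x \<Rightarrow> real) \<Rightarrow> ('y \<Rightarrow> 'y \<Rightarrow> real) \<Rightarrow> (nat \<Rightarrow> 'x) \<Rightarrow> (nat \<Rightarrow> bool)
   \<Rightarrow> (nat \<Rightarrow> 'y) \<Rightarrow> nat \<Rightarrow> (nat \<Rightarrow> nat) \<Rightarrow> (nat \<Rightarrow> 'x \<Rightarrow> real)
   \<Rightarrow> (nat \<Rightarrow> bool \<Rightarrow> 'x \<Rightarrow> nat \<Rightarrow> real) \<Rightarrow> real mat" where
  "Tmat k l x a y n fl ps beta =
    (let G = Gmat k l x y n in
     hcat (G * Smat x a n fl ps beta 1)
     (hcat (G * Smat x a n fl ps beta 2)
     (hcat (G * col_mat (vecr (Vmat x n fl beta 1)))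
     (hcat (G * col_mat (vecr (Vmat x n fl beta 2)))
     (hcat (G * col_mat (vecr (Wmat x a n fl ps beta 1)))
           (G * col_mat (vecr (Wmat x a n fl ps beta 2))))))))"

definition Umat :: "(nat \<Rightarrow> 'x) \<Rightarrow> (nat \<Rightarrow> bool) \<Rightarrow> nat \<Rightarrow> (nat \<Rightarrow> nat) \<Rightarrow> (nat \<Rightarrow> 'x \<Rightarrow> real)
   \<Rightarrow> (nat \<Rightarrow> bool \<Rightarrow> 'x \<Rightarrow> nat \<Rightarrow> real) \<Rightarrow> real mat" where
  "Umat x a n fl ps beta =
     hcat (Smat x a n fl ps beta 1)
     (hcat (Smat x a n fl ps beta 2)
     (hcat (- col_mat (vecr (Dmat x a n fl ps beta 1)))
     (hcat (- col_mat (vecr (Dmat x a n fl ps beta 2)))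
     (hcat (- col_mat (vecr (Vmat x n fl beta 1)))
           (- col_mat (vecr (Vmat x n fl beta 2)))))))"

definition Omega_tilde :: "real \<Rightarrow> ('x \<Rightarrow> 'x \<Rightarrow> real) \<Rightarrow> ('y \<Rightarrow> 'y \<Rightarrow> real) \<Rightarrow> (nat \<Rightarrow> 'x)
   \<Rightarrow> (nat \<Rightarrow> bool) \<Rightarrow> (nat \<Rightarrow> 'y) \<Rightarrow> nat \<Rightarrow> (nat \<Rightarrow> nat) \<Rightarrow> (nat \<Rightarrow> 'x \<Rightarrow> real)
   \<Rightarrow> (nat \<Rightarrow> bool \<Rightarrow> 'x \<Rightarrow> nat \<Rightarrow> real) \<Rightarrow> real mat" where
  "Omega_tilde eps k l x a y n fl ps beta =
    (let T = Tmat k l x a y n fl ps beta; U = Umat x a n fl ps beta in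
     (1 / eps) \<cdot>\<^sub>m 1\<^sub>m (n * n)
     - ((1 - eps) / eps) \<cdot>\<^sub>m
         (T * minv (eps \<cdot>\<^sub>m 1\<^sub>m (2 * n + 4) + (1 - eps) \<cdot>\<^sub>m (transpose_mat U * T))
            * transpose_mat U))"

end

theory Submission
  imports Defs "Jordan_Normal_Form.Determinant"
begin

(* For each observation i, with s = s(i) its fold, the centred influence term
   phi^{3-s}_n(z_i) equals sqrt(2 n_s) times the feature-space element w_i whose coefficient
   vector rho_i in R^{n^2} is row i of D^s placed in block i, minus v^s.  Hence
   Sigma_n = sum_i <w_i, .> w_i is a finite-rank positive operator, and on coefficient vectors
   (1 - eps) Sigma_n + eps I acts as b |-> eps b + (1 - eps) M G b, where G is the Gram matrix of
   the features Lambda_{x_i,y_j} and M = sum_i rho_i rho_i^T = P U^T with T = G P.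
   By the Woodbury identity, Omega~_n is a left inverse of eps I + (1 - eps) T U^T; the inner
   (2n+4)-square matrix is invertible because G and M are positive semidefinite.  So
   b^T = c^T Omega~_n says that (1 - eps) Sigma_n + eps I maps the element with coefficients b
   to psibar_n (whose coefficient vector is c), and injectivity of that operator identifies
   the element as Omega_n(psibar_n). *)

lemma sum_lessThan_mult_nat:
  "(\<Sum>p<m * n. F p) = (\<Sum>i<m. \<Sum>j<n. F (i * n + j :: nat))"
proof (induction m)
  case (Suc m)
  have "(\<Sum>p<Suc m * n. F p) = (\<Sum>p<m * n. F p) + (\<Sum>p=m*n..<m*n+n. F p)"
    by (metis add.commute lessThan_atLeast0 mult_Suc sum.atLeastLessThan_concat le_add1 zero_le)
  also have "(\<Sum>p=m*n..<m*n+n. F p) = (\<Sum>j<n. F (m * n + j))"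
    using sum.shift_bounds_nat_ivl[of F 0 "m * n" n] by (simp add: lessThan_atLeast0 add.commute)
  finally show ?case using Suc by simp
qed simp

lemma sum_lessThan_square_div_mod:
  "(\<Sum>p<n * n. F (p div n) (p mod n)) = (\<Sum>i<n. \<Sum>j<n. F i (j :: nat))"
  using sum_lessThan_mult_nat[of "\<lambda>p. F (p div n) (p mod n)" n n] by simp

lemma sum_lessThan_add_nat: "(\<Sum>k<a + b. f k) = (\<Sum>k<a. f k) + (\<Sum>k<b. f (a + k :: nat))"
  by (induction b) (auto simp: ac_simps)

lemma sum_diff_mult_diff:
  "(\<Sum>i\<in>F. (f i - v) * (g i - w)) =
   (\<Sum>i\<in>F. f i * g i) - w * (\<Sum>i\<in>F. f i) - v * (\<Sum>i\<in>F. g i) + real (card F) * v * (w::real)"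
  by (simp add: algebra_simps sum.distrib sum_subtractf sum_distrib_left)

lemma index_mult_mat_sum:
  "i < dim_row A \<Longrightarrow> j < dim_col B \<Longrightarrow> dim_col A = dim_row B \<Longrightarrow>
   (A * B) $$ (i, j) = (\<Sum>k<dim_col A. A $$ (i, k) * B $$ (k, j))"
  by (simp add: scalar_prod_def lessThan_atLeast0)

lemma index_mult_transpose_sum:
  "i < dim_row A \<Longrightarrow> j < dim_row B \<Longrightarrow> dim_col A = dim_col B \<Longrightarrow>
   (A * transpose_mat B) $$ (i, j) = (\<Sum>k<dim_col A. A $$ (i, k) * B $$ (j, k))"
  by (simp add: scalar_prod_def lessThan_atLeast0)

lemma index_mult_mat_vec_sum:
  "i < dim_row A \<Longrightarrow> dim_vec v = dim_col A \<Longrightarrow> (A *\<^sub>v v) $ i = (\<Sum>k<dim_col A. A $$ (i, k) * v $ k)"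
  by (simp add: scalar_prod_def lessThan_atLeast0 mult_ac)

lemma dim_hcat [simp]:
  "dim_row (hcat A B) = dim_row A" "dim_col (hcat A B) = dim_col A + dim_col B"
  unfolding hcat_def by auto

lemma index_hcat:
  "i < dim_row A \<Longrightarrow> j < dim_col A + dim_col B \<Longrightarrow>
   hcat A B $$ (i, j) = (if j < dim_col A then A $$ (i, j) else B $$ (i, j - dim_col A))"
  unfolding hcat_def by auto

lemma dim_col_mat [simp]: "dim_row (col_mat v) = dim_vec v" "dim_col (col_mat v) = 1"
  unfolding col_mat_def by auto

lemma index_col_mat [simp]: "i < dim_vec v \<Longrightarrow> j < 1 \<Longrightarrow> col_mat v $$ (i, j) = v $ i"
  unfolding col_mat_def by auto

lemma dim_vecr [simp]: "dim_vec (vecr M) = dim_row M * dim_col M"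
  unfolding vecr_def by auto

lemma index_vecr [simp]:
  "p < dim_row M * dim_col M \<Longrightarrow> vecr M $ p = M $$ (p div dim_col M, p mod dim_col M)"
  unfolding vecr_def by auto

lemma col_hcat:
  "dim_row B = dim_row A \<Longrightarrow> j < dim_col A + dim_col B \<Longrightarrow>
   col (hcat A B) j = (if j < dim_col A then col A j else col B (j - dim_col A))"
  by (auto simp: hcat_def col_def)

lemma mult_hcat:
  assumes "dim_row A = dim_col G" "dim_row B = dim_col G"
  shows "G * hcat A B = hcat (G * A) (G * B)"
  by (rule eq_matI) (use assms in \<open>auto simp: col_hcat index_hcat\<close>)

lemma hcat_mult_transpose:
  assumes "dim_row B = dim_row A" "dim_row D = dim_row C"
    and "dim_col C = dim_col A" "dim_col D = dim_col B"
  shows "hcat A B * transpose_mat (hcat C D) = A * transpose_mat C + B * transpose_mat D"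
proof (rule eq_matI)
  fix i j assume "i < dim_row (A * transpose_mat C + B * transpose_mat D)"
    "j < dim_col (A * transpose_mat C + B * transpose_mat D)"
  then have i: "i < dim_row A" and j: "j < dim_row C" using assms by auto
  let ?a = "dim_col A" and ?b = "dim_col B"
  have "(hcat A B * transpose_mat (hcat C D)) $$ (i, j)
      = (\<Sum>k<?a + ?b. hcat A B $$ (i, k) * hcat C D $$ (j, k))"
    using assms i j by (subst index_mult_transpose_sum) auto
  also have "\<dots> = (\<Sum>k<?a. hcat A B $$ (i, k) * hcat C D $$ (j, k))
      + (\<Sum>k<?b. hcat A B $$ (i, ?a + k) * hcat C D $$ (j, ?a + k))"
    by (rule sum_lessThan_add_nat)
  also have "\<dots> = (A * transpose_mat C + B * transpose_mat D) $$ (i, j)"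
    using assms i j by (simp add: hcat_def scalar_prod_def lessThan_atLeast0 row_def)
  finally show "(hcat A B * transpose_mat (hcat C D)) $$ (i, j)
      = (A * transpose_mat C + B * transpose_mat D) $$ (i, j)" .
qed (use assms in auto)

section \<open>Matrix inversion\<close>

lemma transpose_mult_push_through:
  fixes T U :: "'a::comm_ring_1 mat"
  assumes T: "T \<in> carrier_mat N K" and U: "U \<in> carrier_mat N K"
  shows "transpose_mat U * (e \<cdot>\<^sub>m 1\<^sub>m N + c \<cdot>\<^sub>m (T * transpose_mat U))
       = (e \<cdot>\<^sub>m 1\<^sub>m K + c \<cdot>\<^sub>m (transpose_mat U * T)) * transpose_mat U"
proof -
  have Ut: "transpose_mat U \<in> carrier_mat K N" using U by simp
  have TU: "T * transpose_mat U \<in> carrier_mat N N" using T Ut by simp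
  have "transpose_mat U * (e \<cdot>\<^sub>m 1\<^sub>m N + c \<cdot>\<^sub>m (T * transpose_mat U))
      = transpose_mat U * (e \<cdot>\<^sub>m 1\<^sub>m N) + transpose_mat U * (c \<cdot>\<^sub>m (T * transpose_mat U))"
    using TU by (intro mult_add_distrib_mat[OF Ut]) auto
  also have "\<dots> = e \<cdot>\<^sub>m transpose_mat U + c \<cdot>\<^sub>m (transpose_mat U * T * transpose_mat U)"
    using Ut TU T by (simp add: mult_smult_distrib[OF Ut TU] mult_smult_distrib[OF Ut one_carrier_mat]
        assoc_mult_mat[OF Ut T Ut])
  also have "\<dots> = (e \<cdot>\<^sub>m 1\<^sub>m K + c \<cdot>\<^sub>m (transpose_mat U * T)) * transpose_mat U"
    using T Ut by (simp add: add_mult_distrib_mat[of _ K K] mult_smult_assoc_mat[of _ K K])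
  finally show ?thesis .
qed

lemma woodbury_left_inverse:
  fixes T U Xi :: "'a::field mat"
  assumes T: "T \<in> carrier_mat N K" and U: "U \<in> carrier_mat N K" and Xi: "Xi \<in> carrier_mat K K"
    and Xi_inv: "Xi * (e \<cdot>\<^sub>m 1\<^sub>m K + c \<cdot>\<^sub>m (transpose_mat U * T)) = 1\<^sub>m K" and "e \<noteq> 0"
  shows "((1 / e) \<cdot>\<^sub>m 1\<^sub>m N - (c / e) \<cdot>\<^sub>m (T * Xi * transpose_mat U))
           * (e \<cdot>\<^sub>m 1\<^sub>m N + c \<cdot>\<^sub>m (T * transpose_mat U)) = 1\<^sub>m N"
proof -
  define X where "X = e \<cdot>\<^sub>m 1\<^sub>m K + c \<cdot>\<^sub>m (transpose_mat U * T)"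
  define Y where "Y = e \<cdot>\<^sub>m 1\<^sub>m N + c \<cdot>\<^sub>m (T * transpose_mat U)"
  have Ut: "transpose_mat U \<in> carrier_mat K N" using U by simp
  have X: "X \<in> carrier_mat K K" and Y: "Y \<in> carrier_mat N N"
    using T Ut unfolding X_def Y_def by auto
  have "T * Xi * transpose_mat U * Y = T * Xi * (transpose_mat U * Y)"
    using assoc_mult_mat[OF mult_carrier_mat[OF T Xi] Ut Y] .
  also have "\<dots> = T * Xi * (X * transpose_mat U)"
    unfolding X_def Y_def transpose_mult_push_through[OF T U] ..
  also have "\<dots> = T * (Xi * X) * transpose_mat U"
    using assoc_mult_mat[OF T Xi mult_carrier_mat[OF X Ut]] assoc_mult_mat[OF Xi X Ut]
      assoc_mult_mat[OF T mult_carrier_mat[OF Xi X] Ut] by simp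
  also have "\<dots> = T * transpose_mat U" using Xi_inv T by (simp add: X_def)
  finally have TXUY: "T * Xi * transpose_mat U * Y = T * transpose_mat U" .
  have TXU: "T * Xi * transpose_mat U \<in> carrier_mat N N" using T Xi Ut by auto
  have "((1 / e) \<cdot>\<^sub>m 1\<^sub>m N - (c / e) \<cdot>\<^sub>m (T * Xi * transpose_mat U)) * Y
      = (1 / e) \<cdot>\<^sub>m Y - (c / e) \<cdot>\<^sub>m (T * Xi * transpose_mat U * Y)"
    using TXU Y by (simp add: minus_mult_distrib_mat[of _ N N] mult_smult_assoc_mat[of _ N N])
  also have "\<dots> = 1\<^sub>m N"
    unfolding TXUY unfolding Y_def using T Ut \<open>e \<noteq> 0\<close> by (intro eq_matI) (auto simp: field_simps)
  finally show ?thesis unfolding Y_def .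
qed

lemma minv_left_inverse:
  fixes A :: "real mat"
  assumes A: "A \<in> carrier_mat K K" and "det A \<noteq> 0"
  shows "minv A \<in> carrier_mat K K" "minv A * A = 1\<^sub>m K"
proof -
  obtain B where "mat_inverse A = Some B"
    using mat_inverse(1)[OF A, of "()"] det_non_zero_imp_unit[OF A \<open>det A \<noteq> 0\<close>, of "()"]
    by (cases "mat_inverse A") auto
  then show "minv A \<in> carrier_mat K K" "minv A * A = 1\<^sub>m K"
    using mat_inverse(2)[OF A] unfolding minv_def by auto
qed

section \<open>Gram matrices and regularized positive operators\<close>

definition lin_comb :: "(nat \<Rightarrow> 'a::real_vector) \<Rightarrow> nat \<Rightarrow> (nat \<Rightarrow> real) \<Rightarrow> 'a" where
  "lin_comb L N u = (\<Sum>p<N. u p *\<^sub>R L p)"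

definition gram_mat :: "(nat \<Rightarrow> 'a::real_inner) \<Rightarrow> nat \<Rightarrow> real mat" where
  "gram_mat L N = mat N N (\<lambda>(p, q). inner (L p) (L q))"

definition rank_one_sum :: "'i set \<Rightarrow> ('i \<Rightarrow> 'a::real_inner) \<Rightarrow> 'a \<Rightarrow> 'a" where
  "rank_one_sum I w h = (\<Sum>i\<in>I. inner (w i) h *\<^sub>R w i)"

lemma lin_comb_cong: "(\<And>p. p < N \<Longrightarrow> u p = v p) \<Longrightarrow> lin_comb L N u = lin_comb L N v"
  unfolding lin_comb_def by (intro sum.cong) auto

lemma lin_comb_add: "lin_comb L N (\<lambda>p. u p + v p) = lin_comb L N u + lin_comb L N v"
  unfolding lin_comb_def by (simp add: scaleR_add_left sum.distrib)

lemma lin_comb_diff: "lin_comb L N (\<lambda>p. u p - v p) = lin_comb L N u - lin_comb L N v"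
  unfolding lin_comb_def by (simp add: scaleR_diff_left sum_subtractf)

lemma lin_comb_scale: "lin_comb L N (\<lambda>p. c * u p) = c *\<^sub>R lin_comb L N u"
  unfolding lin_comb_def by (simp add: scaleR_sum_right)

lemma lin_comb_sum:
  "lin_comb L N (\<lambda>p. \<Sum>i\<in>I. f i * g i p) = (\<Sum>i\<in>I. f i *\<^sub>R lin_comb L N (g i))"
  unfolding lin_comb_def
  by (simp add: scaleR_sum_right sum_distrib_right scaleR_sum_left sum.swap[of _ I])

lemma gram_mat_carrier [simp]: "gram_mat L N \<in> carrier_mat N N"
  and dim_gram_mat [simp]: "dim_row (gram_mat L N) = N" "dim_col (gram_mat L N) = N"
  unfolding gram_mat_def by auto

lemma index_gram_mat [simp]: "p < N \<Longrightarrow> q < N \<Longrightarrow> gram_mat L N $$ (p, q) = inner (L p) (L q)"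
  unfolding gram_mat_def by simp

lemma inner_lin_comb_right:
  "t < N \<Longrightarrow> inner (L t) (lin_comb L N w) = (\<Sum>q<N. gram_mat L N $$ (t, q) * w q)"
  unfolding lin_comb_def by (simp add: inner_sum_right mult_ac)

lemma inner_lin_comb:
  "inner (lin_comb L N u) (lin_comb L N w) = (\<Sum>p<N. u p * (\<Sum>q<N. gram_mat L N $$ (p, q) * w q))"
  unfolding lin_comb_def[of L N u] inner_sum_left inner_scaleR_left
  by (intro sum.cong refl) (simp add: inner_lin_comb_right)

lemma index_gram_mult_vec:
  "v \<in> carrier_vec N \<Longrightarrow> t < N \<Longrightarrow> (gram_mat L N *\<^sub>v v) $ t = inner (L t) (lin_comb L N (($) v))"
  by (subst index_mult_mat_vec_sum) (auto simp: inner_lin_comb_right)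

lemma gram_quadratic_form:
  assumes "v \<in> carrier_vec N"
  shows "(gram_mat L N *\<^sub>v v) \<bullet> v = inner (lin_comb L N (($) v)) (lin_comb L N (($) v))"
  using assms
  by (simp add: scalar_prod_def lessThan_atLeast0 inner_lin_comb index_gram_mult_vec
      inner_lin_comb_right mult_ac)

lemma gram_mult_vec_eq_0:
  assumes v: "v \<in> carrier_vec N" and "(gram_mat L N *\<^sub>v v) \<bullet> v \<le> 0"
  shows "gram_mat L N *\<^sub>v v = 0\<^sub>v N"
proof -
  have "lin_comb L N (($) v) = 0"
    using assms gram_quadratic_form[OF v] by (metis inner_gt_zero_iff not_less)
  then show ?thesis
    using v by (intro eq_vecI) (simp_all add: index_gram_mult_vec del: index_mult_mat_vec)
qed

lemma linear_rank_one_sum: "linear (rank_one_sum I w)"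
  by (rule linearI) (simp_all add: rank_one_sum_def inner_add_right scaleR_add_left sum.distrib
      scaleR_sum_right)

lemma rank_one_sum_nonneg: "0 \<le> inner (rank_one_sum I w h) h"
  unfolding rank_one_sum_def inner_sum_left by (simp add: sum_nonneg inner_commute)

lemma inj_regularized_nonneg:
  fixes S :: "'a::real_inner \<Rightarrow> 'a"
  assumes "linear S" and S_nonneg: "\<And>h. 0 \<le> inner (S h) h" and "0 \<le> c" "0 < e"
  shows "inj (\<lambda>h. c *\<^sub>R S h + e *\<^sub>R h)"
proof (rule injI)
  fix h1 h2 assume eq: "c *\<^sub>R S h1 + e *\<^sub>R h1 = c *\<^sub>R S h2 + e *\<^sub>R h2"
  have "c *\<^sub>R S (h1 - h2) + e *\<^sub>R (h1 - h2) = (c *\<^sub>R S h1 + e *\<^sub>R h1) - (c *\<^sub>R S h2 + e *\<^sub>R h2)"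
    by (simp add: linear_diff[OF \<open>linear S\<close>] algebra_simps)
  then have "c *\<^sub>R S (h1 - h2) + e *\<^sub>R (h1 - h2) = 0"
    using eq by simp
  then have "c * inner (S (h1 - h2)) (h1 - h2) + e * inner (h1 - h2) (h1 - h2) = 0"
    by (metis inner_add_left inner_scaleR_left inner_zero_left)
  moreover have "0 \<le> c * inner (S (h1 - h2)) (h1 - h2)"
    using S_nonneg \<open>0 \<le> c\<close> by simp
  ultimately have "inner (h1 - h2) (h1 - h2) \<le> 0"
    using \<open>0 < e\<close> by (smt (verit) mult_pos_pos inner_gt_zero_iff)
  then show "h1 = h2" by (metis inner_gt_zero_iff not_less right_minus_eq)
qed

lemma outer_sum_quadratic_form_nonneg:
  fixes M :: "real mat"
  assumes M: "M \<in> carrier_mat N N" "\<And>t q. t < N \<Longrightarrow> q < N \<Longrightarrow> M $$ (t, q) = (\<Sum>i\<in>I. r i t * r i q)"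
    and g: "g \<in> carrier_vec N"
  shows "0 \<le> g \<bullet> (M *\<^sub>v g)"
proof -
  have "g \<bullet> (M *\<^sub>v g) = (\<Sum>t<N. g $ t * (\<Sum>q<N. (\<Sum>i\<in>I. r i t * r i q) * g $ q))"
    using M g by (simp add: scalar_prod_def lessThan_atLeast0 index_mult_mat_vec_sum)
  also have "\<dots> = (\<Sum>t<N. \<Sum>q<N. \<Sum>i\<in>I. (r i t * g $ t) * (r i q * g $ q))"
    by (simp add: sum_distrib_left sum_distrib_right mult_ac)
  also have "\<dots> = (\<Sum>i\<in>I. \<Sum>t<N. \<Sum>q<N. (r i t * g $ t) * (r i q * g $ q))"
    by (simp add: sum.swap[of _ I])
  also have "\<dots> = (\<Sum>i\<in>I. (\<Sum>t<N. r i t * g $ t)\<^sup>2)"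
    by (simp add: power2_eq_square sum_product)
  finally show ?thesis by (simp add: sum_nonneg)
qed

lemma regularized_mult_mat_vec:
  fixes A :: "'a::comm_ring_1 mat"
  assumes "A \<in> carrier_mat K K" "v \<in> carrier_vec K"
  shows "(e \<cdot>\<^sub>m 1\<^sub>m K + c \<cdot>\<^sub>m A) *\<^sub>v v = e \<cdot>\<^sub>v v + c \<cdot>\<^sub>v (A *\<^sub>v v)"
proof (rule eq_vecI)
  fix i assume "i < dim_vec (e \<cdot>\<^sub>v v + c \<cdot>\<^sub>v (A *\<^sub>v v))"
  then have i: "i < K" using assms by simp
  have "((e \<cdot>\<^sub>m 1\<^sub>m K + c \<cdot>\<^sub>m A) *\<^sub>v v) $ i
      = (\<Sum>k<K. (if i = k then e * v $ k else 0) + c * (A $$ (i, k) * v $ k))"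
    using assms i by (subst index_mult_mat_vec_sum) (auto simp: distrib_right mult.assoc intro!: sum.cong)
  also have "\<dots> = e * v $ i + c * (\<Sum>k<K. A $$ (i, k) * v $ k)"
    using i by (simp add: sum.distrib sum_distrib_left)
  also have "\<dots> = (e \<cdot>\<^sub>v v + c \<cdot>\<^sub>v (A *\<^sub>v v)) $ i"
    using assms i by (simp add: index_mult_mat_vec_sum del: index_mult_mat_vec)
  finally show "((e \<cdot>\<^sub>m 1\<^sub>m K + c \<cdot>\<^sub>m A) *\<^sub>v v) $ i = (e \<cdot>\<^sub>v v + c \<cdot>\<^sub>v (A *\<^sub>v v)) $ i" .
qed (use assms in simp)

lemma sum_mult_gram_outer_sum:
  fixes M :: "real mat"
  assumes M: "M \<in> carrier_mat N N" "\<And>t q. t < N \<Longrightarrow> q < N \<Longrightarrow> M $$ (t, q) = (\<Sum>i\<in>I. r i t * r i q)"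
    and q: "q < N"
  shows "(\<Sum>p<N. b p * (gram_mat L N * M) $$ (p, q))
    = (\<Sum>i\<in>I. inner (lin_comb L N (r i)) (lin_comb L N b) * r i q)"
proof -
  let ?G = "gram_mat L N"
  have "(\<Sum>p<N. b p * (?G * M) $$ (p, q))
      = (\<Sum>p<N. \<Sum>t<N. \<Sum>i\<in>I. r i t * (?G $$ (t, p) * b p) * r i q)"
  proof (intro sum.cong refl)
    fix p assume "p \<in> {..<N}"
    then show "b p * (?G * M) $$ (p, q) = (\<Sum>t<N. \<Sum>i\<in>I. r i t * (?G $$ (t, p) * b p) * r i q)"
      using M q by (subst index_mult_mat_sum)
        (auto simp: sum_distrib_left inner_commute mult_ac intro!: sum.cong)
  qed
  also have "\<dots> = (\<Sum>t<N. \<Sum>p<N. \<Sum>i\<in>I. r i t * (?G $$ (t, p) * b p) * r i q)"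
    by (rule sum.swap)
  also have "\<dots> = (\<Sum>t<N. \<Sum>i\<in>I. \<Sum>p<N. r i t * (?G $$ (t, p) * b p) * r i q)"
    by (intro sum.cong refl) (rule sum.swap)
  also have "\<dots> = (\<Sum>i\<in>I. \<Sum>t<N. \<Sum>p<N. r i t * (?G $$ (t, p) * b p) * r i q)"
    by (rule sum.swap)
  also have "\<dots> = (\<Sum>i\<in>I. (\<Sum>t<N. r i t * (\<Sum>p<N. ?G $$ (t, p) * b p)) * r i q)"
    by (simp add: sum_distrib_left sum_distrib_right)
  finally show ?thesis by (simp add: inner_lin_comb)
qed

lemma lin_comb_regularized_gram:
  fixes M :: "real mat"
  assumes M: "M \<in> carrier_mat N N" "\<And>t q. t < N \<Longrightarrow> q < N \<Longrightarrow> M $$ (t, q) = (\<Sum>i\<in>I. r i t * r i q)"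
    and c: "\<And>q. q < N \<Longrightarrow> c q = (\<Sum>p<N. b p * (e \<cdot>\<^sub>m 1\<^sub>m N + (1 - e) \<cdot>\<^sub>m (gram_mat L N * M)) $$ (p, q))"
  shows "lin_comb L N c
    = (1 - e) *\<^sub>R rank_one_sum I (\<lambda>i. lin_comb L N (r i)) (lin_comb L N b) + e *\<^sub>R lin_comb L N b"
proof -
  have "c q = (1 - e) * (\<Sum>i\<in>I. inner (lin_comb L N (r i)) (lin_comb L N b) * r i q) + e * b q"
    if q: "q < N" for q
  proof -
    have "c q = (\<Sum>p<N. (if p = q then e * b p else 0) + (1 - e) * (b p * (gram_mat L N * M) $$ (p, q)))"
      unfolding c[OF q] using M q by (intro sum.cong refl) (auto simp: algebra_simps)
    then show ?thesis
      using q by (simp add: sum.distrib sum_mult_gram_outer_sum[OF M q] sum_distrib_left[symmetric])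
  qed
  then show ?thesis
    by (simp add: lin_comb_cong[of N c] lin_comb_add lin_comb_scale lin_comb_sum rank_one_sum_def)
qed

text \<open>If \<open>X v = 0\<close>, then \<open>u = P v\<close> and \<open>g = G u\<close> satisfy
  \<open>e (g \<bullet> u) + (1 - e) (g \<bullet> P Q\<^sup>T g) = 0\<close> with both terms nonnegative, so the
  Gram form \<open>g \<bullet> u\<close> vanishes, hence \<open>g = 0\<close> and \<open>v = 0\<close>.\<close>
lemma regularized_gram_det_nonzero:
  fixes P Q :: "real mat"
  assumes P: "P \<in> carrier_mat N K" and Q: "Q \<in> carrier_mat N K"
    and nonneg: "\<And>g. g \<in> carrier_vec N \<Longrightarrow> 0 \<le> g \<bullet> ((P * transpose_mat Q) *\<^sub>v g)"
    and e: "0 < e" "e < 1"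
  shows "det (e \<cdot>\<^sub>m 1\<^sub>m K + (1 - e) \<cdot>\<^sub>m (transpose_mat Q * (gram_mat L N * P))) \<noteq> 0"
proof
  let ?G = "gram_mat L N" and ?A = "transpose_mat Q * (gram_mat L N * P)"
  let ?M = "P * transpose_mat Q"
  have Qt: "transpose_mat Q \<in> carrier_mat K N" using Q by simp
  have GP: "?G * P \<in> carrier_mat N K" by (rule mult_carrier_mat[OF gram_mat_carrier P])
  have A: "?A \<in> carrier_mat K K" using Qt GP by (rule mult_carrier_mat)
  have X: "e \<cdot>\<^sub>m 1\<^sub>m K + (1 - e) \<cdot>\<^sub>m ?A \<in> carrier_mat K K"
    using A by (intro add_carrier_mat smult_carrier_mat one_carrier_mat)
  assume "det (e \<cdot>\<^sub>m 1\<^sub>m K + (1 - e) \<cdot>\<^sub>m ?A) = 0"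
  then obtain v where v: "v \<in> carrier_vec K" "v \<noteq> 0\<^sub>v K"
    and Xv: "(e \<cdot>\<^sub>m 1\<^sub>m K + (1 - e) \<cdot>\<^sub>m ?A) *\<^sub>v v = 0\<^sub>v K"
    using det_0_iff_vec_prod_zero[OF X] by blast
  define u where "u = P *\<^sub>v v"
  define g where "g = ?G *\<^sub>v u"
  have u: "u \<in> carrier_vec N" unfolding u_def using P v(1) by (rule mult_mat_vec_carrier)
  have g: "g \<in> carrier_vec N" unfolding g_def using gram_mat_carrier u by (rule mult_mat_vec_carrier)
  have Qg: "transpose_mat Q *\<^sub>v g \<in> carrier_vec K" using Qt g by (rule mult_mat_vec_carrier)
  have Mg: "?M *\<^sub>v g \<in> carrier_vec N"
    using mult_carrier_mat[OF P Qt] g by (rule mult_mat_vec_carrier)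
  have "?A *\<^sub>v v = transpose_mat Q *\<^sub>v g"
    using assoc_mult_mat_vec[OF Qt GP v(1)] assoc_mult_mat_vec[OF gram_mat_carrier[of L N] P v(1)]
    by (simp add: u_def g_def)
  then have ev: "e \<cdot>\<^sub>v v + (1 - e) \<cdot>\<^sub>v (transpose_mat Q *\<^sub>v g) = 0\<^sub>v K"
    using Xv unfolding regularized_mult_mat_vec[OF A v(1)] by simp
  have "e \<cdot>\<^sub>v u + (1 - e) \<cdot>\<^sub>v (?M *\<^sub>v g) = P *\<^sub>v (e \<cdot>\<^sub>v v + (1 - e) \<cdot>\<^sub>v (transpose_mat Q *\<^sub>v g))"
    using v(1) Qg by (simp add: mult_add_distrib_mat_vec[OF P] mult_mat_vec[OF P]
        assoc_mult_mat_vec[OF P Qt g] u_def)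
  also have "\<dots> = 0\<^sub>v N" unfolding ev using P by (intro eq_vecI) auto
  finally have "g \<bullet> (e \<cdot>\<^sub>v u + (1 - e) \<cdot>\<^sub>v (?M *\<^sub>v g)) = 0"
    using g by simp
  then have "e * (g \<bullet> u) + (1 - e) * (g \<bullet> (?M *\<^sub>v g)) = 0"
    using g u Mg by (simp add: scalar_prod_add_distrib[OF g])
  moreover have "0 \<le> (1 - e) * (g \<bullet> (?M *\<^sub>v g))"
    using nonneg[OF g] e by simp
  ultimately have "g \<bullet> u \<le> 0"
    using e by (smt (verit) mult_pos_pos)
  then have "g = 0\<^sub>v N"
    using gram_mult_vec_eq_0[OF u, of L] unfolding g_def by blast
  then have "transpose_mat Q *\<^sub>v g = 0\<^sub>v K"
    using Qt by (intro eq_vecI) (auto simp: scalar_prod_def)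
  moreover have "(1 - e) \<cdot>\<^sub>v 0\<^sub>v K = (0\<^sub>v K :: real vec)" by (intro eq_vecI) auto
  ultimately have ev0: "e \<cdot>\<^sub>v v = 0\<^sub>v K" using ev v(1) by simp
  have "v $ i = 0" if "i < K" for i
    using arg_cong[OF ev0, of "\<lambda>w. w $ i"] that v(1) e by simp
  then have "v = 0\<^sub>v K" using v(1) by (intro eq_vecI) auto
  with v(2) show False by contradiction
qed

section \<open>The cross-fitted estimator in coefficient form\<close>

locale crossfit_setting =
  fixes k :: "'x \<Rightarrow> 'x \<Rightarrow> real" and l :: "'y \<Rightarrow> 'y \<Rightarrow> real"
    and Kf :: "'x \<Rightarrow> 'hx::real_inner" and Lf :: "'y \<Rightarrow> 'hy::real_inner"
    and tensor :: "'hx \<Rightarrow> 'hy \<Rightarrow> 'h::real_inner"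
    and Lam :: "'x \<Rightarrow> 'y \<Rightarrow> 'h"
    and n :: nat and x :: "nat \<Rightarrow> 'x" and a :: "nat \<Rightarrow> bool" and y :: "nat \<Rightarrow> 'y"
    and fl :: "nat \<Rightarrow> nat"
    and ps :: "nat \<Rightarrow> 'x \<Rightarrow> real"
    and beta :: "nat \<Rightarrow> bool \<Rightarrow> 'x \<Rightarrow> nat \<Rightarrow> real"
  assumes k_feat: "\<And>u v. k u v = inner (Kf u) (Kf v)"
    and l_feat: "\<And>u v. l u v = inner (Lf u) (Lf v)"
    and tensor_inner: "\<And>f g f' g'. inner (tensor f g) (tensor f' g') = inner f f' * inner g g'"
    and Lam_def: "\<And>u v. Lam u v = tensor (Kf u) (Lf v)"
    and folds: "\<forall>i<n. fl i \<in> {1, 2}"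
    and fold1_ne: "fold_set fl n 1 \<noteq> {}" and fold2_ne: "fold_set fl n 2 \<noteq> {}"
    and pi_range: "\<And>r u. r \<in> {1, 2} \<Longrightarrow> 0 < ps r u \<and> ps r u < 1"
    and beta_zero: "\<And>r b u j. r \<in> {1, 2} \<Longrightarrow> j \<notin> fold_set fl n r \<or> a j \<noteq> b \<Longrightarrow> beta r b u j = 0"
begin

abbreviation "C \<equiv> Cmat x a n fl ps beta"
abbreviation "E \<equiv> Emat x n fl beta"
abbreviation "D s \<equiv> Dmat x a n fl ps beta s"
abbreviation "V s \<equiv> Vmat x n fl beta s"
abbreviation "W s \<equiv> Wmat x a n fl ps beta s"
abbreviation "S s \<equiv> Smat x a n fl ps beta s"
abbreviation "U \<equiv> Umat x a n fl ps beta"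
abbreviation "ns \<equiv> nf fl n"
abbreviation "theta_r \<equiv> theta Lam y n beta"
abbreviation "psi \<equiv> psi_r Lam x y n fl beta"
abbreviation "phi \<equiv> phi_r Lam x y n fl ps beta"

lemma finite_fold_set: "finite (fold_set fl n s)"
  unfolding fold_set_def by auto

lemma nf_pos: "s \<in> {1, 2} \<Longrightarrow> 0 < ns s"
  using fold1_ne fold2_ne finite_fold_set unfolding nf_def by (auto simp: card_gt_0_iff)

lemma beta_own_index: "i < n \<Longrightarrow> beta (3 - fl i) b u i = 0"
  using folds by (intro beta_zero) (auto simp: fold_set_def)

lemma sum_folds: "(\<Sum>s\<in>{1, 2}. \<Sum>i\<in>fold_set fl n s. f s i) = (\<Sum>i<n. f (fl i) i)"
proof -
  have "(\<Sum>s\<in>{1, 2}. \<Sum>i\<in>fold_set fl n s. f s i) = (\<Sum>s\<in>{1, 2}. \<Sum>i\<in>fold_set fl n s. f (fl i) i)"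
    by (intro sum.cong refl) (auto simp: fold_set_def)
  also have "\<dots> = (\<Sum>i\<in>(\<Union>s\<in>{1, 2}. fold_set fl n s). f (fl i) i)"
    by (rule sum.UNION_disjoint[symmetric]) (auto simp: finite_fold_set fold_set_def)
  also have "(\<Union>s\<in>{1, 2}. fold_set fl n s) = {..<n}"
    using folds by (auto simp: fold_set_def)
  finally show ?thesis .
qed

definition ipw :: "nat \<Rightarrow> real" where
  "ipw i = of_bool (a i) / wgt x fl ps i - (1 - of_bool (a i)) / (1 - wgt x fl ps i)"

lemma index_Cmat_scaled:
  assumes i: "i < n" and j: "j < n"
  shows "2 * ns (fl i) * C $$ (i, j)
    = ipw i * (of_bool (j = i) - beta (3 - fl i) (a i) (x i) j)
      + beta (3 - fl i) True (x i) j - beta (3 - fl i) False (x i) j"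
proof -
  have "0 < ns (fl i)" using nf_pos folds i by simp
  moreover have "0 < wgt x fl ps i" "wgt x fl ps i < 1"
    using pi_range[of "3 - fl i" "x i"] folds i by (auto simp: wgt_def)
  ultimately show ?thesis
    using i j beta_own_index[OF i]
    by (cases "j = i"; cases "a i") (auto simp: Cmat_def ipw_def field_simps)
qed

lemma phi_eq_Cmat:
  assumes i: "i < n"
  shows "phi (3 - fl i) (x i) (a i) (y i)
    = (\<Sum>j<n. (2 * ns (fl i) * C $$ (i, j)) *\<^sub>R Lam (x i) (y j)) - psi (3 - fl i)"
proof -
  let ?r = "3 - fl i"
  have "(\<Sum>j<n. (2 * ns (fl i) * C $$ (i, j)) *\<^sub>R Lam (x i) (y j))
      = (\<Sum>j<n. (ipw i * of_bool (j = i)) *\<^sub>R Lam (x i) (y j))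
        - (\<Sum>j<n. (ipw i * beta ?r (a i) (x i) j) *\<^sub>R Lam (x i) (y j))
        + (\<Sum>j<n. beta ?r True (x i) j *\<^sub>R Lam (x i) (y j))
        - (\<Sum>j<n. beta ?r False (x i) j *\<^sub>R Lam (x i) (y j))"
    by (simp add: index_Cmat_scaled[OF i] right_diff_distrib scaleR_left_diff_distrib scaleR_left_distrib
        sum.distrib sum_subtractf)
  also have "(\<Sum>j<n. (ipw i * of_bool (j = i)) *\<^sub>R Lam (x i) (y j)) = ipw i *\<^sub>R Lam (x i) (y i)"
    using i by (simp add: of_bool_def if_distrib[of "\<lambda>c. (_ * c) *\<^sub>R _"] cong: if_cong)
  also have "ipw i *\<^sub>R Lam (x i) (y i)
        - (\<Sum>j<n. (ipw i * beta ?r (a i) (x i) j) *\<^sub>R Lam (x i) (y j))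
        + (\<Sum>j<n. beta ?r True (x i) j *\<^sub>R Lam (x i) (y j))
        - (\<Sum>j<n. beta ?r False (x i) j *\<^sub>R Lam (x i) (y j))
      = ipw i *\<^sub>R (Lam (x i) (y i) - theta_r ?r (a i) (x i))
        + theta_r ?r True (x i) - theta_r ?r False (x i)"
    by (simp add: theta_def scaleR_diff_right scaleR_sum_right)
  finally show ?thesis
    by (simp add: phi_r_def ipw_def wgt_def)
qed

lemma psibar_eq_Cmat:
  "psibar Lam x a y n fl ps beta = (\<Sum>i<n. \<Sum>j<n. C $$ (i, j) *\<^sub>R Lam (x i) (y j))"
proof -
  have fold_term: "psi (3 - s) + (1 / ns s) *\<^sub>R (\<Sum>i\<in>fold_set fl n s. phi (3 - s) (x i) (a i) (y i))
      = (\<Sum>i\<in>fold_set fl n s. \<Sum>j<n. (2 * C $$ (i, j)) *\<^sub>R Lam (x i) (y j))"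
    if s: "s \<in> {1, 2}" for s
  proof -
    have "(\<Sum>i\<in>fold_set fl n s. phi (3 - s) (x i) (a i) (y i))
        = (\<Sum>i\<in>fold_set fl n s. (\<Sum>j<n. (2 * ns s * C $$ (i, j)) *\<^sub>R Lam (x i) (y j)) - psi (3 - s))"
      by (intro sum.cong refl) (auto simp: fold_set_def phi_eq_Cmat)
    then have "(\<Sum>i\<in>fold_set fl n s. phi (3 - s) (x i) (a i) (y i))
        = (\<Sum>i\<in>fold_set fl n s. \<Sum>j<n. (2 * ns s * C $$ (i, j)) *\<^sub>R Lam (x i) (y j))
          - ns s *\<^sub>R psi (3 - s)"
      by (simp add: sum_subtractf nf_def sum_constant_scaleR)
    then show ?thesis
      using nf_pos[OF s] by (simp add: scaleR_diff_right scaleR_sum_right)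
  qed
  have "psibar Lam x a y n fl ps beta
      = (1 / 2) *\<^sub>R (\<Sum>s\<in>{1, 2}. \<Sum>i\<in>fold_set fl n s. \<Sum>j<n. (2 * C $$ (i, j)) *\<^sub>R Lam (x i) (y j))"
    unfolding psibar_def using fold_term[of 1] fold_term[of 2] by (simp add: add.commute)
  also have "\<dots> = (1 / 2) *\<^sub>R (\<Sum>i<n. \<Sum>j<n. (2 * C $$ (i, j)) *\<^sub>R Lam (x i) (y j))"
    unfolding sum_folds ..
  also have "\<dots> = (\<Sum>i<n. \<Sum>j<n. C $$ (i, j) *\<^sub>R Lam (x i) (y j))"
    by (simp add: scaleR_sum_right)
  finally show ?thesis .
qed

lemma psi_eq_Emat:
  assumes s: "s \<in> {1, 2}"
  shows "psi (3 - s) = (\<Sum>m<n. \<Sum>j<n. (if fl m = s then 2 * E $$ (m, j) else 0) *\<^sub>R Lam (x m) (y j))"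
proof -
  have s3: "3 - (3 - s) = s" using s by auto
  have "psi (3 - s) = (\<Sum>m\<in>fold_set fl n s. \<Sum>j<n.
      (1 / ns s) *\<^sub>R ((beta (3 - s) True (x m) j - beta (3 - s) False (x m) j) *\<^sub>R Lam (x m) (y j)))"
    unfolding psi_r_def theta_def s3
    by (simp add: scaleR_sum_right sum_subtractf[symmetric] scaleR_diff_left)
  also have "\<dots> = (\<Sum>m\<in>fold_set fl n s. \<Sum>j<n. (2 * E $$ (m, j)) *\<^sub>R Lam (x m) (y j))"
  proof (intro sum.cong refl)
    fix m j assume m: "m \<in> fold_set fl n s" and j: "j \<in> {..<n}"
    then have "m < n" "fl m = s" by (auto simp: fold_set_def)
    moreover have "1 / ns s * (beta (3 - s) True (x m) j - beta (3 - s) False (x m) j) = 2 * E $$ (m, j)"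
      using j calculation nf_pos[OF s] beta_own_index[of m] by (cases "j = m") (auto simp: Emat_def field_simps)
    ultimately show "(1 / ns s) *\<^sub>R ((beta (3 - s) True (x m) j - beta (3 - s) False (x m) j) *\<^sub>R Lam (x m) (y j))
        = (2 * E $$ (m, j)) *\<^sub>R Lam (x m) (y j)"
      by (simp only: scaleR_scaleR)
  qed
  also have "\<dots> = (\<Sum>m<n. \<Sum>j<n. (if fl m = s then 2 * E $$ (m, j) else 0) *\<^sub>R Lam (x m) (y j))"
  proof -
    have "fold_set fl n s = {..<n} \<inter> {m. fl m = s}" by (auto simp: fold_set_def)
    then show ?thesis
      by (simp add: sum.inter_restrict) (intro sum.cong refl; simp)
  qed
  finally show ?thesis .
qed

definition Lam_flat :: "nat \<Rightarrow> 'h" where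
  "Lam_flat p = Lam (x (p div n)) (y (p mod n))"

lemma lin_comb_Lam_flat:
  "lin_comb Lam_flat (n * n) (\<lambda>p. f (p div n) (p mod n)) = (\<Sum>i<n. \<Sum>j<n. f i j *\<^sub>R Lam (x i) (y j))"
  unfolding lin_comb_def Lam_flat_def
  using sum_lessThan_square_div_mod[of "\<lambda>i j. f i j *\<^sub>R Lam (x i) (y j)" n] by simp

lemma Gmat_eq_gram: "Gmat k l x y n = gram_mat Lam_flat (n * n)"
proof (rule eq_matI)
  fix p q assume "p < dim_row (gram_mat Lam_flat (n * n))" "q < dim_col (gram_mat Lam_flat (n * n))"
  then have "p < n * n" "q < n * n" by simp_all
  moreover from this have "0 < n" by (cases n) auto
  moreover from calculation have "p div n < n" "q div n < n" "p mod n < n" "q mod n < n"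
    by (auto simp: less_mult_imp_div_less intro: mod_less_divisor)
  ultimately show "Gmat k l x y n $$ (p, q) = gram_mat Lam_flat (n * n) $$ (p, q)"
    by (simp add: Gmat_def kron_def Kmat_def Lam_flat_def Lam_def tensor_inner k_feat l_feat)
qed (simp_all add: Gmat_def kron_def Kmat_def)

definition rho :: "nat \<Rightarrow> nat \<Rightarrow> real" where
  "rho i p = (if p div n = i then D (fl i) $$ (i, p mod n) else 0) - V (fl i) $$ (p div n, p mod n)"

lemma phi_eq_rho:
  assumes i: "i < n"
  shows "phi (3 - fl i) (x i) (a i) (y i) = sqrt (2 * ns (fl i)) *\<^sub>R lin_comb Lam_flat (n * n) (rho i)"
proof -
  let ?s = "fl i" and ?c = "sqrt (2 * ns (fl i))"
  have s: "?s \<in> {1, 2}" using folds i by simp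
  have sq: "?c * ?c = 2 * ns ?s" and sq2: "?c * sqrt (2 / ns ?s) = 2"
    using nf_pos[OF s] by (simp_all add: real_sqrt_mult[symmetric])
  have "?c *\<^sub>R lin_comb Lam_flat (n * n) (rho i)
      = (\<Sum>m<n. \<Sum>j<n. (if m = i then ?c * D ?s $$ (i, j) else 0) *\<^sub>R Lam (x m) (y j))
        - (\<Sum>m<n. \<Sum>j<n. (?c * V ?s $$ (m, j)) *\<^sub>R Lam (x m) (y j))"
    unfolding rho_def lin_comb_diff lin_comb_Lam_flat[of "\<lambda>m j. if m = i then D ?s $$ (i, j) else 0"]
      lin_comb_Lam_flat[of "\<lambda>m j. V ?s $$ (m, j)"]
    by (simp add: scaleR_diff_right scaleR_sum_right) (intro sum.cong refl; simp)
  also have "(\<Sum>m<n. \<Sum>j<n. (if m = i then ?c * D ?s $$ (i, j) else 0) *\<^sub>R Lam (x m) (y j))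
      = (\<Sum>m<n. if m = i then \<Sum>j<n. (2 * ns ?s * C $$ (i, j)) *\<^sub>R Lam (x i) (y j) else 0)"
  proof (intro sum.cong refl)
    fix m assume "m \<in> {..<n}"
    show "(\<Sum>j<n. (if m = i then ?c * D ?s $$ (i, j) else 0) *\<^sub>R Lam (x m) (y j))
        = (if m = i then \<Sum>j<n. (2 * ns ?s * C $$ (i, j)) *\<^sub>R Lam (x i) (y j) else 0)"
      using i sq by (cases "m = i") (auto simp: Dmat_def mult.assoc[symmetric] intro!: sum.cong)
  qed
  also have "\<dots> = (\<Sum>j<n. (2 * ns ?s * C $$ (i, j)) *\<^sub>R Lam (x i) (y j))"
    using i by simp
  also have "(\<Sum>m<n. \<Sum>j<n. (?c * V ?s $$ (m, j)) *\<^sub>R Lam (x m) (y j)) = psi (3 - ?s)"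
    unfolding psi_eq_Emat[OF s]
    by (intro sum.cong refl) (simp add: Vmat_def sq2 mult.assoc[symmetric])
  finally show ?thesis using phi_eq_Cmat[OF i] by simp
qed

lemma Sigma_n_eq_rank_one_sum:
  "Sigma_n Lam x a y n fl ps beta = rank_one_sum {..<n} (\<lambda>i. lin_comb Lam_flat (n * n) (rho i))"
proof
  fix h
  let ?w = "\<lambda>i. lin_comb Lam_flat (n * n) (rho i)"
  have fold_term: "(1 / ns s) *\<^sub>R (\<Sum>i\<in>fold_set fl n s.
      inner (phi (3 - s) (x i) (a i) (y i)) h *\<^sub>R phi (3 - s) (x i) (a i) (y i))
    = (\<Sum>i\<in>fold_set fl n s. 2 *\<^sub>R (inner (?w i) h *\<^sub>R ?w i))" if s: "s \<in> {1, 2}" for s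
  proof -
    have "inner (phi (3 - s) (x i) (a i) (y i)) h *\<^sub>R phi (3 - s) (x i) (a i) (y i)
        = (2 * ns s) *\<^sub>R (inner (?w i) h *\<^sub>R ?w i)" if "i \<in> fold_set fl n s" for i
      using that nf_pos[OF s] by (auto simp: fold_set_def phi_eq_rho)
    then show ?thesis
      using nf_pos[OF s] by (simp add: scaleR_sum_right)
  qed
  show "Sigma_n Lam x a y n fl ps beta h = rank_one_sum {..<n} ?w h"
    unfolding Sigma_n_def rank_one_sum_def
    using fold_term[of 1] fold_term[of 2] sum_folds[of "\<lambda>s i. 2 *\<^sub>R (inner (?w i) h *\<^sub>R ?w i)"]
    by (simp add: add.commute scaleR_sum_right)
qed

definition Pmat :: "real mat" where
  "Pmat = hcat (S 1) (hcat (S 2) (hcat (col_mat (vecr (V 1))) (hcat (col_mat (vecr (V 2)))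
     (hcat (col_mat (vecr (W 1))) (col_mat (vecr (W 2)))))))"

lemma dim_blocks [simp]:
  "dim_row (D s) = n" "dim_col (D s) = n" "dim_row (V s) = n" "dim_col (V s) = n"
  "dim_row (W s) = n" "dim_col (W s) = n" "dim_row (S s) = n * n" "dim_col (S s) = n"
  by (auto simp: Dmat_def Vmat_def Wmat_def Smat_def face_split_def)

lemma Pmat_carrier: "Pmat \<in> carrier_mat (n * n) (2 * n + 4)"
  and Umat_carrier: "U \<in> carrier_mat (n * n) (2 * n + 4)"
  unfolding Pmat_def Umat_def carrier_mat_def by simp_all

lemma Cmat_carrier: "C \<in> carrier_mat n n"
  unfolding Cmat_def by simp

lemma lin_comb_vecr:
  assumes "M \<in> carrier_mat n n"
  shows "lin_comb Lam_flat (n * n) (($) (vecr M)) = (\<Sum>i<n. \<Sum>j<n. M $$ (i, j) *\<^sub>R Lam (x i) (y j))"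
proof -
  have "lin_comb Lam_flat (n * n) (($) (vecr M)) = lin_comb Lam_flat (n * n) (\<lambda>p. M $$ (p div n, p mod n))"
    using assms by (intro lin_comb_cong) auto
  then show ?thesis by (simp only: lin_comb_Lam_flat[of "\<lambda>i j. M $$ (i, j)"])
qed

lemma Tmat_eq: "Tmat k l x a y n fl ps beta = gram_mat Lam_flat (n * n) * Pmat"
  unfolding Tmat_def Pmat_def Let_def Gmat_eq_gram by (simp add: mult_hcat)

lemma index_Smat:
  assumes "p < n * n" "i < n"
  shows "S s $$ (p, i) = (if p div n = i then D s $$ (i, p mod n) else 0)"
proof -
  have "p div n < n" using assms(1) by (simp add: less_mult_imp_div_less)
  then show ?thesis using assms by (auto simp: Smat_def face_split_def)
qed

lemma Dmat_outside_fold: "i < n \<Longrightarrow> j < n \<Longrightarrow> fl i \<noteq> s \<Longrightarrow> D s $$ (i, j) = 0"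
  by (simp add: Dmat_def)

lemma sum_fold_Smat:
  assumes t: "t < n * n"
  shows "(\<Sum>i\<in>fold_set fl n s. S s $$ (t, i)) = D s $$ (t div n, t mod n)"
proof -
  have n: "0 < n" using t by (cases n) auto
  have td: "t div n < n" using t by (simp add: less_mult_imp_div_less)
  have "(\<Sum>i\<in>fold_set fl n s. S s $$ (t, i))
      = (\<Sum>i\<in>fold_set fl n s. if t div n = i then D s $$ (i, t mod n) else 0)"
    using t by (intro sum.cong refl) (simp add: index_Smat fold_set_def)
  also have "\<dots> = D s $$ (t div n, t mod n)"
    using finite_fold_set Dmat_outside_fold[OF td _, of "t mod n" s] n td
    by (auto simp: fold_set_def)
  finally show ?thesis .
qed

lemma sum_Smat_Smat:
  assumes t: "t < n * n" and q: "q < n * n"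
  shows "(\<Sum>i<n. S s $$ (t, i) * S s $$ (q, i)) = (\<Sum>i\<in>fold_set fl n s. S s $$ (t, i) * S s $$ (q, i))"
proof (rule sum.mono_neutral_right)
  show "\<forall>i\<in>{..<n} - fold_set fl n s. S s $$ (t, i) * S s $$ (q, i) = 0"
    using t Dmat_outside_fold by (auto simp: fold_set_def index_Smat)
qed (auto simp: fold_set_def)

lemma fold_outer_sum:
  assumes t: "t < n * n" and q: "q < n * n"
  shows "(S s * transpose_mat (S s)) $$ (t, q)
    + (col_mat (vecr (V s)) * transpose_mat (- col_mat (vecr (D s)))) $$ (t, q)
    + (col_mat (vecr (W s)) * transpose_mat (- col_mat (vecr (V s)))) $$ (t, q)
    = (\<Sum>i\<in>fold_set fl n s. rho i t * rho i q)"
proof -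
  have n: "0 < n" using t by (cases n) auto
  let ?v = "\<lambda>p. V s $$ (p div n, p mod n)" and ?d = "\<lambda>p. D s $$ (p div n, p mod n)"
  have rho_S: "rho i p = S s $$ (p, i) - ?v p" if "i \<in> fold_set fl n s" "p < n * n" for i p
    using that by (simp add: rho_def index_Smat fold_set_def)
  have "(\<Sum>i\<in>fold_set fl n s. rho i t * rho i q)
      = (\<Sum>i\<in>fold_set fl n s. (S s $$ (t, i) - ?v t) * (S s $$ (q, i) - ?v q))"
    using t q by (intro sum.cong refl) (simp add: rho_S)
  also have "\<dots> = (\<Sum>i<n. S s $$ (t, i) * S s $$ (q, i)) - ?v q * ?d t - ?v t * ?d q
      + ns s * ?v t * ?v q"
    unfolding sum_diff_mult_diff sum_fold_Smat[OF t] sum_fold_Smat[OF q] sum_Smat_Smat[OF t q] nf_def ..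
  also have "\<dots> = (S s * transpose_mat (S s)) $$ (t, q)
    + (col_mat (vecr (V s)) * transpose_mat (- col_mat (vecr (D s)))) $$ (t, q)
    + (col_mat (vecr (W s)) * transpose_mat (- col_mat (vecr (V s)))) $$ (t, q)"
  proof -
    have "t div n < n" "t mod n < n" using t n by (simp_all add: less_mult_imp_div_less)
    moreover have "(S s * transpose_mat (S s)) $$ (t, q) = (\<Sum>i<n. S s $$ (t, i) * S s $$ (q, i))"
      using t q by (subst index_mult_transpose_sum) auto
    moreover have "(col_mat (vecr (V s)) * transpose_mat (- col_mat (vecr (D s)))) $$ (t, q) = - (?v t * ?d q)"
      using t q by (subst index_mult_transpose_sum) auto
    moreover have "(col_mat (vecr (W s)) * transpose_mat (- col_mat (vecr (V s)))) $$ (t, q)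
        = - ((?d t - ns s * ?v t) * ?v q)"
      using t q calculation(1,2) by (subst index_mult_transpose_sum) (auto simp: Wmat_def)
    ultimately show ?thesis by (simp add: algebra_simps)
  qed
  finally show ?thesis by simp
qed

lemma index_Pmat_mult_transpose_Umat:
  assumes t: "t < n * n" and q: "q < n * n"
  shows "(Pmat * transpose_mat U) $$ (t, q) = (\<Sum>i<n. rho i t * rho i q)"
proof -
  have "(Pmat * transpose_mat U) $$ (t, q) = (\<Sum>s\<in>{1, 2}. \<Sum>i\<in>fold_set fl n s. rho i t * rho i q)"
    unfolding Pmat_def Umat_def
    using t q fold_outer_sum[OF t q, of 1] fold_outer_sum[OF t q, of 2]
    by (simp add: hcat_mult_transpose del: index_mult_mat(1))
  then show ?thesis by (simp only: sum_folds)
qed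

lemma Omega_tilde_left_inverse:
  assumes e: "0 < e" "e < 1"
  shows "Omega_tilde e k l x a y n fl ps beta
    * (e \<cdot>\<^sub>m 1\<^sub>m (n * n) + (1 - e) \<cdot>\<^sub>m (Tmat k l x a y n fl ps beta * transpose_mat U)) = 1\<^sub>m (n * n)"
proof -
  let ?K = "2 * n + 4" and ?T = "Tmat k l x a y n fl ps beta"
  define X where "X = e \<cdot>\<^sub>m 1\<^sub>m ?K + (1 - e) \<cdot>\<^sub>m (transpose_mat U * ?T)"
  have T: "?T \<in> carrier_mat (n * n) ?K"
    unfolding Tmat_eq using gram_mat_carrier Pmat_carrier by (rule mult_carrier_mat)
  have X: "X \<in> carrier_mat ?K ?K" using T Umat_carrier unfolding X_def by auto
  have "det X \<noteq> 0"
    unfolding X_def Tmat_eq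
  proof (rule regularized_gram_det_nonzero[OF Pmat_carrier Umat_carrier _ e])
    have "Pmat * transpose_mat U \<in> carrier_mat (n * n) (n * n)"
      using Pmat_carrier Umat_carrier by auto
    then show "0 \<le> g \<bullet> ((Pmat * transpose_mat U) *\<^sub>v g)" if "g \<in> carrier_vec (n * n)" for g
      using index_Pmat_mult_transpose_Umat that by (rule outer_sum_quadratic_form_nonneg)
  qed
  from minv_left_inverse[OF X this] show ?thesis
    unfolding Omega_tilde_def Let_def X_def using e
    by (intro woodbury_left_inverse[OF T Umat_carrier]) auto
qed

lemma regularized_Sigma_n_coefficients:
  assumes "dim_vec b = n * n"
    and "mat_of_row b * (e \<cdot>\<^sub>m 1\<^sub>m (n * n) + (1 - e) \<cdot>\<^sub>m (Tmat k l x a y n fl ps beta * transpose_mat U))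
       = mat_of_row c"
  shows "lin_comb Lam_flat (n * n) (($) c)
    = (1 - e) *\<^sub>R Sigma_n Lam x a y n fl ps beta (lin_comb Lam_flat (n * n) (($) b))
      + e *\<^sub>R lin_comb Lam_flat (n * n) (($) b)"
proof -
  let ?N = "n * n" and ?M = "Pmat * transpose_mat U"
  have M: "?M \<in> carrier_mat ?N ?N" using Pmat_carrier Umat_carrier by auto
  have TU: "Tmat k l x a y n fl ps beta * transpose_mat U = gram_mat Lam_flat ?N * ?M"
    unfolding Tmat_eq using gram_mat_carrier Pmat_carrier Umat_carrier by (intro assoc_mult_mat) auto
  have coef: "c $ q = (\<Sum>p<?N. b $ p * (e \<cdot>\<^sub>m 1\<^sub>m ?N + (1 - e) \<cdot>\<^sub>m (gram_mat Lam_flat ?N * ?M)) $$ (p, q))"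
    if "q < ?N" for q
  proof -
    have "dim_vec c = ?N" using arg_cong[OF assms(2), of dim_col] Umat_carrier by simp
    then show ?thesis
      using arg_cong[OF assms(2)[unfolded TU], of "\<lambda>A. A $$ (0, q)"] that assms(1) M
      by (subst (asm) index_mult_mat_sum) auto
  qed
  show ?thesis
    unfolding Sigma_n_eq_rank_one_sum
    by (rule lin_comb_regularized_gram[OF M index_Pmat_mult_transpose_Umat coef])
qed

lemma inj_regularized_Sigma_n:
  "0 < e \<Longrightarrow> e < 1 \<Longrightarrow> inj (\<lambda>h. (1 - e) *\<^sub>R Sigma_n Lam x a y n fl ps beta h + e *\<^sub>R h)"
  unfolding Sigma_n_eq_rank_one_sum
  by (rule inj_regularized_nonneg[OF linear_rank_one_sum rank_one_sum_nonneg]) auto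

end

theorem lemmaH5:
  fixes k :: "'x \<Rightarrow> 'x \<Rightarrow> real" and l :: "'y \<Rightarrow> 'y \<Rightarrow> real"
    and Kf :: "'x \<Rightarrow> 'hx::real_inner" and Lf :: "'y \<Rightarrow> 'hy::real_inner"
    and tensor :: "'hx \<Rightarrow> 'hy \<Rightarrow> 'h::real_inner"
    and Lam :: "'x \<Rightarrow> 'y \<Rightarrow> 'h"
    and n :: nat and x :: "nat \<Rightarrow> 'x" and a :: "nat \<Rightarrow> bool" and y :: "nat \<Rightarrow> 'y"
    and fl :: "nat \<Rightarrow> nat"
    and ps :: "nat \<Rightarrow> 'x \<Rightarrow> real"
    and beta :: "nat \<Rightarrow> bool \<Rightarrow> 'x \<Rightarrow> nat \<Rightarrow> real"
    and eps :: real and B :: "real mat"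
  assumes k_feat: "\<And>u v. k u v = inner (Kf u) (Kf v)"
    and l_feat: "\<And>u v. l u v = inner (Lf u) (Lf v)"
    and k_bdd: "\<exists>M. \<forall>u. k u u \<le> M"
    and l_bdd: "\<exists>M. \<forall>v. l v v \<le> M"
    and tensor_inner: "\<And>f g f' g'. inner (tensor f g) (tensor f' g') = inner f f' * inner g g'"
    and Lam_def: "\<And>u v. Lam u v = tensor (Kf u) (Lf v)"
    and folds: "\<forall>i<n. fl i \<in> {1, 2}"
    and fold1_ne: "fold_set fl n 1 \<noteq> {}" and fold2_ne: "fold_set fl n 2 \<noteq> {}"
    and pi_range: "\<And>r u. r \<in> {1, 2} \<Longrightarrow> 0 < ps r u \<and> ps r u < 1"
    and beta_zero: "\<And>r b u j. r \<in> {1, 2} \<Longrightarrow> j \<notin> fold_set fl n r \<or> a j \<noteq> b \<Longrightarrow> beta r b u j = 0"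
    and eps_range: "0 < eps" "eps < 1"
    and B_dim: "B \<in> carrier_mat n n"
    and B_coef: "mat_of_row (vecr B)
                   = mat_of_row (vecr (Cmat x a n fl ps beta)) * Omega_tilde eps k l x a y n fl ps beta"
  shows "Omega_n eps Lam x a y n fl ps beta (psibar Lam x a y n fl ps beta)
           = (\<Sum>i<n. \<Sum>j<n. (B $$ (i, j)) *\<^sub>R Lam (x i) (y j))"
proof -
  interpret crossfit_setting k l Kf Lf tensor Lam n x a y fl ps beta
    using k_feat l_feat tensor_inner Lam_def folds fold1_ne fold2_ne pi_range beta_zero
    by unfold_locales auto
  let ?N = "n * n"
  let ?Y = "eps \<cdot>\<^sub>m 1\<^sub>m ?N + (1 - eps) \<cdot>\<^sub>m (Tmat k l x a y n fl ps beta * transpose_mat U)"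
  let ?f = "\<lambda>h. (1 - eps) *\<^sub>R Sigma_n Lam x a y n fl ps beta h + eps *\<^sub>R h"
  have C_row: "mat_of_row (vecr C) \<in> carrier_mat 1 ?N" using Cmat_carrier by auto
  have Omega: "Omega_tilde eps k l x a y n fl ps beta \<in> carrier_mat ?N ?N"
    and Y: "?Y \<in> carrier_mat ?N ?N"
    using Umat_carrier by (auto simp: Omega_tilde_def Let_def Tmat_eq)
  have "mat_of_row (vecr B) * ?Y = mat_of_row (vecr C)"
    unfolding B_coef assoc_mult_mat[OF C_row Omega Y] Omega_tilde_left_inverse[OF eps_range]
    by (rule right_mult_one_mat[OF C_row])
  from regularized_Sigma_n_coefficients[OF _ this]
  have "psibar Lam x a y n fl ps beta = ?f (\<Sum>i<n. \<Sum>j<n. (B $$ (i, j)) *\<^sub>R Lam (x i) (y j))"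
    using B_dim by (simp add: psibar_eq_Cmat lin_comb_vecr[OF Cmat_carrier] lin_comb_vecr[OF B_dim])
  then show ?thesis
    unfolding Omega_n_def using inv_into_f_f[OF inj_regularized_Sigma_n[OF eps_range] UNIV_I] by simp
qed

end
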